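(* Let $p$ be an odd prime. Then the sequence $\left(\left\lfloor n^{p-1}/p \right\rfloor\right)_{n \ge 1}$ is eventually prime-free.
   Context: A sequence $(a_n)_{n\ge 1}$ of positive integers is called eventually prime-free if there exists an index $n_0$ such that $a_n$ is composite for all $n \ge n_0$. (Here, as in the paper, this is understood as: only finitely many terms $a_n$ are prime.) *)

theory Defs
  imports "HOL-Computational_Algebra.Primes"
begin

definition eventually_prime_free :: "(nat \<Rightarrow> nat) \<Rightarrow> bool" where
  "eventually_prime_free a \<longleftrightarrow> finite {n. n \<ge> 1 \<and> prime (a n)}"

end

theory Submission
  imports Defs "HOL-Number_Theory.Residues"
begin

text \<open>Write \<open>p - 1 = 2m\<close>. If \<open>p\<close> divides \<open>n\<close>, then \<open>n^(p-1) div p = (n div p) * n^(p-2)\<close>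
  is a product of two factors \<open>\<ge> 2\<close> once \<open>n \<ge> 2p\<close>. Otherwise Fermat's little theorem
  gives \<open>x\<^sup>2 \<equiv> 1 (mod p)\<close> for \<open>x = n^m\<close>, so \<open>n^(p-1) div p = (x - 1)(x + 1) / p\<close>, and \<open>p\<close>
  cancels against one of the two factors, leaving a nontrivial factorisation once \<open>x > 2p\<close>.\<close>

lemma not_prime_mult:
  fixes a b :: nat
  assumes "a \<ge> 2" "b \<ge> 2"
  shows "\<not> prime (a * b)"
  using prime_product[of a b] assms by auto

lemma not_prime_mult_div:
  fixes p a b :: nat
  assumes "p dvd a" "a \<ge> 2 * p" "b \<ge> 2"
  shows "\<not> prime (a * b div p)"
proof (cases "p = 0")
  case False
  from \<open>p dvd a\<close> obtain k where a: "a = p * k" ..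
  with \<open>a \<ge> 2 * p\<close> False have "k \<ge> 2" by simp
  moreover have "a * b div p = k * b" using a False by simp
  ultimately show ?thesis using not_prime_mult \<open>b \<ge> 2\<close> by metis
qed simp

lemma not_prime_square_div:
  fixes p x :: nat
  assumes "prime p" "[x\<^sup>2 = 1] (mod p)" "x > 2 * p"
  shows "\<not> prime (x\<^sup>2 div p)"
proof -
  have "p \<ge> 2" using \<open>prime p\<close> prime_ge_2_nat by blast
  have "x\<^sup>2 mod p = 1" using assms(2) \<open>p \<ge> 2\<close> by (simp add: cong_def)
  then have "x\<^sup>2 = p * (x\<^sup>2 div p) + 1"
    by (metis div_mult_mod_eq add.commute mult.commute)
  moreover have "x\<^sup>2 = (x - 1) * (x + 1) + 1"
    using \<open>x > 2 * p\<close> by (cases x) (simp_all add: power2_eq_square)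
  ultimately have product: "(x - 1) * (x + 1) = p * (x\<^sup>2 div p)" by linarith
  then have quotient: "x\<^sup>2 div p = (x - 1) * (x + 1) div p"
    using \<open>p \<ge> 2\<close> by simp
  have "p dvd (x - 1) * (x + 1)" using product by simp
  then consider "p dvd x - 1" | "p dvd x + 1"
    using \<open>prime p\<close> prime_dvd_mult_iff by blast
  then show ?thesis
  proof cases
    case 1
    then show ?thesis
      using quotient not_prime_mult_div[of p "x - 1" "x + 1"] \<open>x > 2 * p\<close> by simp
  next
    case 2
    then show ?thesis
      using quotient not_prime_mult_div[of p "x + 1" "x - 1"] \<open>x > 2 * p\<close> \<open>p \<ge> 2\<close>
      by (simp add: mult.commute)
  qed
qed

lemma not_prime_power_pred_div:
  fixes p n :: nat
  assumes "prime p" "odd p" "n > 2 * p"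
  shows "\<not> prime (n ^ (p - 1) div p)"
proof -
  have "p \<ge> 3" using assms(1,2) prime_ge_2_nat[of p] by (cases "p = 2") auto
  show ?thesis
  proof (cases "p dvd n")
    case True
    have "n ^ (p - 2) \<ge> n" using \<open>p \<ge> 3\<close> \<open>n > 2 * p\<close> by (simp add: self_le_power)
    moreover have "p - 1 = Suc (p - 2)" using \<open>p \<ge> 3\<close> by simp
    then have "n ^ (p - 1) = n * n ^ (p - 2)" by simp
    ultimately show ?thesis
      using not_prime_mult_div[OF True, of "n ^ (p - 2)"] \<open>n > 2 * p\<close> \<open>p \<ge> 3\<close> by simp
  next
    case False
    define x where "x = n ^ ((p - 1) div 2)"
    have "x\<^sup>2 = n ^ (p - 1)"
      using \<open>odd p\<close> \<open>p \<ge> 3\<close> by (simp add: x_def flip: power_mult)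
    moreover have "x \<ge> n"
      unfolding x_def using \<open>p \<ge> 3\<close> \<open>n > 2 * p\<close> by (intro self_le_power) auto
    ultimately show ?thesis
      using not_prime_square_div[OF \<open>prime p\<close>, of x] fermat_theorem[OF \<open>prime p\<close> False]
        \<open>n > 2 * p\<close> by simp
  qed
qed

theorem theorem9:
  fixes p :: nat
  assumes "prime p" and "odd p"
  shows "eventually_prime_free (\<lambda>n. n ^ (p - 1) div p)"
proof -
  have "{n. n \<ge> 1 \<and> prime (n ^ (p - 1) div p)} \<subseteq> {..2 * p}"
    using not_prime_power_pred_div[OF assms] by (auto simp: not_less[symmetric])
  then show ?thesis
    unfolding eventually_prime_free_def by (rule finite_subset) simp
qed

end
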